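(* Let $d\ge 2$, $m\ge 1$, and let the ancillae $A_1,\dots,A_{m}$ consecutively measure a prepared quantum system $Q$, so that the joint pure state of $Q A_1\cdots A_m$ is $$|\Psi\rangle=\sum_{x_1,\dots,x_m}\alpha^{(1)}_{x_1}U^{(2)}_{x_1x_2}\cdots U^{(m)}_{x_{m-1}x_m}\,|\widetilde{x}_m\rangle_Q|x_1\rangle_{A_1}\cdots|x_m\rangle_{A_m}.$$ Then the reduced density matrix $\rho(A_1\cdots A_m)=\mathrm{Tr}_Q|\Psi\rangle\langle\Psi|$ is a classical-quantum state of the form $$\rho(A_1\cdots A_m)=\sum_{x_m}q^{(m)}_{x_m}\,|\psi_{x_m}\rangle\langle\psi_{x_m}|\otimes|x_m\rangle\langle x_m|,$$ where $q^{(m)}$ is the probability distribution of outcomes of $A_m$ and each $|\psi_{x_m}\rangle$ is a normalized pure state of $A_1\cdots A_{m-1}$, and its joint entropy is contained only in the last device: $$S(A_1\cdots A_m)=S(A_m).$$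
   Context: $Q$ is a $d$-dimensional quantum system initially in the pure state $|Q\rangle=\sum_{x_1=1}^d\alpha^{(1)}_{x_1}|\widetilde{x}_1\rangle$ ("prepared" state). For each $i$ an orthonormal basis $\{|\widetilde{x}_i\rangle\}_{x_i=1}^d$ of $Q$ is the basis measured by ancilla $A_i$, and $U^{(i)}_{x_{i-1}x_i}=\langle\widetilde{x}_i|\widetilde{x}_{i-1}\rangle$ ($i\ge2$) are the entries of a unitary $d\times d$ matrix. Each ancilla $A_i$ is a $d$-dimensional system with orthonormal basis $\{|x\rangle\}_{x=1}^d$, starting in a fixed state $|0\rangle$; the measurement by $A_i$ is the unitary $U_{QA_i}=\sum_{x}|\widetilde{x}_i\rangle\langle\widetilde{x}_i|\otimes U_x$ with $U_x|0\rangle=|x\rangle$, applied in the order $A_1,A_2,\dots$; this yields the displayed state $|\Psi\rangle$. The outcome distribution of $A_m$ is $q^{(m)}_{x_m}=\sum_{x_1,\dots,x_{m-1}}|\alpha^{(1)}_{x_1}|^2|U^{(2)}_{x_1x_2}|^2\cdots|U^{(m)}_{x_{m-1}x_m}|^2$. $S(X)=-\mathrm{Tr}\,\rho(X)\log_d\rho(X)$ denotes the von Neumann entropy (logarithm base $d$) of the reduced state of subsystem $X$. *)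

theory Defs
  imports Complex_Main "Jordan_Normal_Form.Char_Poly"
begin

text \<open>Computational basis indices run over 0..d-1. A composite system of n
subsystems of dimension d is indexed by 0..d^n-1; subsystem p (0-based, p = 0 is
the leftmost tensor factor) carries the p-th most significant base-d digit.\<close>

definition dig :: "nat \<Rightarrow> nat \<Rightarrow> nat \<Rightarrow> nat \<Rightarrow> nat" where
  "dig d n p a = a div d ^ (n - 1 - p) mod d"

definition digs :: "nat \<Rightarrow> nat \<Rightarrow> nat \<Rightarrow> nat list" where
  "digs d n a = map (\<lambda>p. dig d n p a) [0..<n]"

definition unitary_fn :: "nat \<Rightarrow> (nat \<Rightarrow> nat \<Rightarrow> complex) \<Rightarrow> bool" where
  "unitary_fn d V \<longleftrightarrow>
     (\<forall>a<d. \<forall>b<d. (\<Sum>k<d. V a k * cnj (V b k)) = (if a = b then 1 else 0)) \<and>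
     (\<forall>a<d. \<forall>b<d. (\<Sum>k<d. cnj (V k a) * V k b) = (if a = b then 1 else 0))"

text \<open>Amplitude alpha_{x1} U^(2)_{x1 x2} ... U^(m)_{x(m-1) xm}; xs = [x1,...,xm].\<close>
definition amp :: "(nat \<Rightarrow> complex) \<Rightarrow> (nat \<Rightarrow> nat \<Rightarrow> nat \<Rightarrow> complex) \<Rightarrow> nat list \<Rightarrow> complex" where
  "amp \<alpha> U xs = \<alpha> (xs ! 0) * (\<Prod>i\<in>{2..length xs}. U i (xs ! (i - 2)) (xs ! (i - 1)))"

text \<open>The joint state |Psi> of Q A_1 ... A_m (Q = subsystem 0, expressed in the basis
|x~_m>, A_i = subsystem i).\<close>
definition psi :: "nat \<Rightarrow> nat \<Rightarrow> (nat \<Rightarrow> complex) \<Rightarrow> (nat \<Rightarrow> nat \<Rightarrow> nat \<Rightarrow> complex) \<Rightarrow> complex vec" where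
  "psi d m \<alpha> U = vec (d ^ Suc m)
     (\<lambda>a. let ys = digs d (Suc m) a in if ys ! 0 = ys ! m then amp \<alpha> U (tl ys) else 0)"

definition proj :: "complex vec \<Rightarrow> complex mat" where
  "proj v = mat (dim_vec v) (dim_vec v) (\<lambda>(i, j). v $ i * cnj (v $ j))"

definition kron :: "complex mat \<Rightarrow> complex mat \<Rightarrow> complex mat" where
  "kron A B = mat (dim_row A * dim_row B) (dim_col A * dim_col B)
     (\<lambda>(i, j). A $$ (i div dim_row B, j div dim_col B) * B $$ (i mod dim_row B, j mod dim_col B))"

text \<open>Reduced state (partial trace) of a state rho of n subsystems of dimension d,
keeping the subsystems listed (in increasing order) in keep.\<close>
definition reduced :: "nat \<Rightarrow> nat \<Rightarrow> nat list \<Rightarrow> complex mat \<Rightarrow> complex mat" where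
  "reduced d n keep \<rho> = mat (d ^ length keep) (d ^ length keep) (\<lambda>(i, j).
     \<Sum>a<d ^ n. \<Sum>b<d ^ n.
       if digs d (length keep) i = map (\<lambda>p. dig d n p a) keep \<and>
          digs d (length keep) j = map (\<lambda>p. dig d n p b) keep \<and>
          (\<forall>p<n. p \<notin> set keep \<longrightarrow> dig d n p a = dig d n p b)
       then \<rho> $$ (a, b) else 0)"

text \<open>Von Neumann entropy with logarithm base d: Shannon entropy of the eigenvalues
(roots of the characteristic polynomial, counted with algebraic multiplicity).\<close>
definition eta :: "nat \<Rightarrow> real \<Rightarrow> real" where
  "eta d t = (if t \<le> 0 then 0 else t * log (real d) t)"

definition vn_entropy :: "nat \<Rightarrow> complex mat \<Rightarrow> real" where
  "vn_entropy d \<rho> = - (\<Sum>e\<in>{e. poly (char_poly \<rho>) e = 0}.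
      real (order e (char_poly \<rho>)) * eta d (Re e))"

definition qdist :: "nat \<Rightarrow> nat \<Rightarrow> (nat \<Rightarrow> complex) \<Rightarrow> (nat \<Rightarrow> nat \<Rightarrow> nat \<Rightarrow> complex) \<Rightarrow> nat \<Rightarrow> real" where
  "qdist d m \<alpha> U x = (\<Sum>xs\<in>{xs. length xs = m - 1 \<and> set xs \<subseteq> {..<d}}.
     let ys = xs @ [x] in
       (cmod (\<alpha> (ys ! 0)))\<^sup>2 * (\<Prod>i\<in>{2..m}. (cmod (U i (ys ! (i - 2)) (ys ! (i - 1))))\<^sup>2))"

end

theory Submission
  imports Defs
begin

text \<open>Let n = m - 1 and let \<phi>_x be the unnormalized state of A_1 ... A_n given that A_m
reads x. Since Q is left in the basis state recorded by A_m, the joint state is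
\<Sum>_x |x\<rangle> \<otimes> |\<phi>_x\<rangle> \<otimes> |x\<rangle>, with Q written in the basis measured by A_m. Tracing out Q
therefore gives \<rho>(A_1 ... A_m) = W W\<dagger>, where W is the d^m \<times> d matrix with columns
|\<phi>_x\<rangle> \<otimes> |x\<rangle>; normalizing the columns yields the classical-quantum form with weights
q_x = |\<phi>_x|^2. The columns are orthogonal, so W\<dagger> W = diag q = \<rho>(A_m). By Sylvester's
determinant identity the characteristic polynomials of W W\<dagger> and W\<dagger> W agree up to a power
of X, and zero eigenvalues carry no entropy.\<close>

lemma sum_lessThan_mult:
  fixes f :: "nat \<Rightarrow> 'a::comm_monoid_add"
  shows "(\<Sum>a<m * n. f a) = (\<Sum>q<m. \<Sum>r<n. f (q * n + r))"
proof -
  have "(\<Sum>r<n. f (q * n + r)) = sum f {q * n..<q * n + n}" for q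
    using sum.shift_bounds_nat_ivl[of f 0 "q * n" n] by (simp add: atLeast0LessThan add.commute)
  then show ?thesis by (simp add: sum.nat_group)
qed

lemma sum_if_const: "(\<Sum>x\<in>A. if P then f x else 0) = (if P then \<Sum>x\<in>A. f x else 0)"
  by simp

lemma mult_add_less_mult:
  fixes q r m n :: nat
  assumes "q < m" "r < n"
  shows "q * n + r < m * n"
proof -
  have "q * n + r < Suc q * n" using assms(2) by simp
  also have "\<dots> \<le> m * n" using assms(1) by (intro mult_le_mono1) simp
  finally show ?thesis .
qed

lemma index_mult_adjoint:
  fixes A :: "complex mat"
  assumes "i < dim_row A" "j < dim_row A"
  shows "(A * map_mat cnj (transpose_mat A)) $$ (i, j) = (\<Sum>x<dim_col A. A $$ (i, x) * cnj (A $$ (j, x)))"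
  using assms by (simp add: scalar_prod_def atLeast0LessThan)

lemma index_adjoint_mult:
  fixes A :: "complex mat"
  assumes "x < dim_col A" "y < dim_col A"
  shows "(map_mat cnj (transpose_mat A) * A) $$ (x, y) = (\<Sum>i<dim_row A. cnj (A $$ (i, x)) * A $$ (i, y))"
  using assms by (simp add: scalar_prod_def atLeast0LessThan)

definition sq_norm_vec :: "complex vec \<Rightarrow> real" where
  "sq_norm_vec v = (\<Sum>i<dim_vec v. (cmod (v $ i))\<^sup>2)"

(* The zero vector is sent to e_0, a unit vector whenever dim v > 0; below this only
   happens for outcomes of probability 0. *)
definition normalize_vec :: "complex vec \<Rightarrow> complex vec" where
  "normalize_vec v = (if sq_norm_vec v = 0 then unit_vec (dim_vec v) 0
     else (1 / complex_of_real (sqrt (sq_norm_vec v))) \<cdot>\<^sub>v v)"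

lemma dim_normalize_vec [simp]: "dim_vec (normalize_vec v) = dim_vec v"
  by (simp add: normalize_vec_def)

lemma sq_norm_vec_nonneg: "sq_norm_vec v \<ge> 0"
  by (simp add: sq_norm_vec_def sum_nonneg)

lemma sq_norm_normalize_vec:
  assumes "dim_vec v > 0"
  shows "sq_norm_vec (normalize_vec v) = 1"
proof (cases "sq_norm_vec v = 0")
  case True
  have "(cmod (if i = 0 then (1::complex) else 0))\<^sup>2 = (if i = 0 then 1 else 0)" for i :: nat
    by simp
  with True assms show ?thesis by (simp add: sq_norm_vec_def normalize_vec_def unit_vec_def)
next
  case False
  then have "sq_norm_vec v > 0" using sq_norm_vec_nonneg[of v] by simp
  with False show ?thesis
    by (simp add: normalize_vec_def sq_norm_vec_def norm_divide power_divide
        flip: sum_divide_distrib)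
qed

lemma sq_norm_vec_smult_proj_normalize_vec:
  "complex_of_real (sq_norm_vec v) \<cdot>\<^sub>m proj (normalize_vec v) = proj v"
proof (cases "sq_norm_vec v = 0")
  case True
  then have "v $ i = 0" if "i < dim_vec v" for i
    using that sum_nonneg_eq_0_iff[of "{..<dim_vec v}" "\<lambda>i. (cmod (v $ i))\<^sup>2"]
    by (simp add: sq_norm_vec_def)
  with True show ?thesis by (intro eq_matI) (simp_all add: proj_def)
next
  case False
  let ?s = "complex_of_real (sqrt (sq_norm_vec v))"
  have "sq_norm_vec v > 0" using False sq_norm_vec_nonneg[of v] by simp
  then have "?s * ?s = complex_of_real (sq_norm_vec v)" "?s \<noteq> 0"
    by (simp_all flip: of_real_mult)
  with False show ?thesis by (intro eq_matI) (auto simp: proj_def normalize_vec_def field_simps)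
qed

section \<open>Base-d digits\<close>

lemma length_digs [simp]: "length (digs d n a) = n"
  by (simp add: digs_def)

lemma nth_digs [simp]: "p < n \<Longrightarrow> digs d n a ! p = dig d n p a"
  by (simp add: digs_def)

lemma digs_Suc:
  assumes "d > 0"
  shows "digs d (Suc n) a = digs d n (a div d) @ [a mod d]"
proof (rule nth_equalityI)
  fix p assume "p < length (digs d (Suc n) a)"
  then consider "p < n" | "p = n" by fastforce
  then show "digs d (Suc n) a ! p = (digs d n (a div d) @ [a mod d]) ! p"
  proof cases
    case 1
    then have "n - p = Suc (n - 1 - p)" by simp
    then have "a div d ^ (n - p) = a div d div d ^ (n - 1 - p)"
      by (simp add: div_mult2_eq)
    then show ?thesis using 1 by (simp add: nth_append dig_def)
  qed (simp add: nth_append dig_def)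
qed simp

lemma digs_Suc_snoc:
  "d > 0 \<Longrightarrow> x < d \<Longrightarrow> digs d (Suc n) (k * d + x) = digs d n k @ [x]"
  by (simp add: digs_Suc)

lemma digs_Suc_Cons:
  "d > 0 \<Longrightarrow> q < d \<Longrightarrow> r < d ^ n \<Longrightarrow> digs d (Suc n) (q * d ^ n + r) = q # digs d n r"
proof (induction n arbitrary: r)
  case 0
  then show ?case by (simp add: digs_def dig_def)
next
  case (Suc n)
  have "r div d < d ^ n"
    using Suc.prems by (simp add: less_mult_imp_div_less mult.commute)
  moreover have "q * d ^ Suc n + r = (q * d ^ n + r div d) * d + r mod d"
    by (simp add: algebra_simps)
  ultimately show ?case
    using Suc by (simp add: digs_Suc_snoc digs_Suc[of d n r])
qed

lemma digs_inj:
  assumes "d > 0" "a < d ^ n" "b < d ^ n" "digs d n a = digs d n b"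
  shows "a = b"
  using assms(2-)
proof (induction n arbitrary: a b)
  case (Suc n)
  have "a div d < d ^ n" "b div d < d ^ n"
    using Suc.prems assms(1) by (auto simp: div_less_iff_less_mult mult.commute)
  with Suc have "a div d = b div d" "a mod d = b mod d"
    by (auto simp: digs_Suc[OF assms(1)])
  then show ?case by (metis div_mult_mod_eq)
qed simp

lemma bij_betw_digs:
  assumes "d > 0"
  shows "bij_betw (digs d n) {..<d ^ n} {xs. length xs = n \<and> set xs \<subseteq> {..<d}}"
proof -
  let ?L = "{xs. length xs = n \<and> set xs \<subseteq> {..<d}}"
  have inj: "inj_on (digs d n) {..<d ^ n}"
    using digs_inj[OF assms] by (auto intro: inj_onI)
  have "digs d n ` {..<d ^ n} \<subseteq> ?L"
    using assms by (auto simp: digs_def dig_def)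
  moreover have "finite ?L" "card ?L = d ^ n"
    using finite_lists_length_eq[of "{..<d}" n] card_lists_length_eq[of "{..<d}" n]
    by (simp_all add: conj_commute)
  ultimately have "digs d n ` {..<d ^ n} = ?L"
    by (intro card_subset_eq) (simp_all add: card_image[OF inj])
  with inj show ?thesis by (simp add: bij_betw_def)
qed

lemma digs_one: "x < d \<Longrightarrow> digs d 1 x = [x]"
  by (simp add: digs_def dig_def)

lemma dig_Suc_Cons:
  assumes "d > 0" "q < d" "r < d ^ n"
  shows "dig d (Suc n) 0 (q * d ^ n + r) = q"
    and "map (\<lambda>p. dig d (Suc n) p (q * d ^ n + r)) [1..<Suc n] = digs d n r"
proof -
  have digs: "digs d (Suc n) (q * d ^ n + r) = q # digs d n r" by (rule digs_Suc_Cons[OF assms])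
  from arg_cong[OF digs, of "\<lambda>xs. xs ! 0"] show "dig d (Suc n) 0 (q * d ^ n + r) = q"
    by (simp only: nth_digs zero_less_Suc nth_Cons_0)
  have "map (\<lambda>p. dig d (Suc n) p (q * d ^ n + r)) [1..<Suc n] = tl (digs d (Suc n) (q * d ^ n + r))"
    by (simp add: digs_def upt_conv_Cons del: upt_Suc)
  with digs show "map (\<lambda>p. dig d (Suc n) p (q * d ^ n + r)) [1..<Suc n] = digs d n r"
    by simp
qed

lemma dig_Suc_snoc:
  assumes "d > 0" "x < d"
  shows "dig d (Suc n) n (k * d + x) = x"
    and "p < n \<Longrightarrow> dig d (Suc n) p (k * d + x) = dig d n p k"
proof -
  have "dig d (Suc n) p (k * d + x) = (digs d n k @ [x]) ! p" if "p < Suc n" for p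
    using that by (simp flip: digs_Suc_snoc[OF assms])
  then show "dig d (Suc n) n (k * d + x) = x" "p < n \<Longrightarrow> dig d (Suc n) p (k * d + x) = dig d n p k"
    by (simp_all add: nth_append)
qed

section \<open>Partial traces of a pure state\<close>

lemma reduced_proj_trace_first:
  assumes d: "d > 0" and v: "dim_vec v = d ^ Suc n" and i: "i < d ^ n" and j: "j < d ^ n"
  shows "reduced d (Suc n) [1..<Suc n] (proj v) $$ (i, j) =
    (\<Sum>q<d. v $ (q * d ^ n + i) * cnj (v $ (q * d ^ n + j)))"
proof -
  let ?c = "\<lambda>a b. digs d n i = map (\<lambda>p. dig d (Suc n) p a) [1..<Suc n] \<and>
    digs d n j = map (\<lambda>p. dig d (Suc n) p b) [1..<Suc n] \<and>
    (\<forall>p<Suc n. p \<notin> set [1..<Suc n] \<longrightarrow> dig d (Suc n) p a = dig d (Suc n) p b)"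
  have cond: "?c (q * d ^ n + r) (q' * d ^ n + r') \<longleftrightarrow> r = i \<and> q' = q \<and> r' = j"
    if "q < d" "r < d ^ n" "q' < d" "r' < d ^ n" for q r q' r'
  proof -
    have others: "(\<forall>p<Suc n. p \<notin> set [1..<Suc n] \<longrightarrow> P p) \<longleftrightarrow> P 0" for P
      by (auto simp: less_Suc_eq_0_disj)
    show ?thesis
      unfolding others dig_Suc_Cons[OF d that(1,2)] dig_Suc_Cons[OF d that(3,4)]
      using digs_inj[OF d i that(2)] digs_inj[OF d j that(4)] by blast
  qed
  have "reduced d (Suc n) [1..<Suc n] (proj v) $$ (i, j) =
      (\<Sum>a<d * d ^ n. \<Sum>b<d * d ^ n. if ?c a b then proj v $$ (a, b) else 0)"
    using i j by (simp add: reduced_def del: upt_Suc)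
  also have "\<dots> = (\<Sum>q<d. \<Sum>r<d ^ n. \<Sum>q'<d. \<Sum>r'<d ^ n. if r = i then if q' = q then
      if r' = j then v $ (q * d ^ n + r) * cnj (v $ (q' * d ^ n + r')) else 0 else 0 else 0)"
    unfolding sum_lessThan_mult
  proof (intro sum.cong refl)
    fix q r q' r' assume "q \<in> {..<d}" "r \<in> {..<d ^ n}" "q' \<in> {..<d}" "r' \<in> {..<d ^ n}"
    then show "(if ?c (q * d ^ n + r) (q' * d ^ n + r') then proj v $$ (q * d ^ n + r, q' * d ^ n + r') else 0) =
      (if r = i then if q' = q then
      if r' = j then v $ (q * d ^ n + r) * cnj (v $ (q' * d ^ n + r')) else 0 else 0 else 0)"
      using cond[of q r q' r'] by (simp add: proj_def v mult_add_less_mult)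
  qed
  also have "\<dots> = (\<Sum>q<d. v $ (q * d ^ n + i) * cnj (v $ (q * d ^ n + j)))"
    using i j by (simp add: sum_if_const sum.delta')
  finally show ?thesis .
qed

lemma reduced_proj_keep_last:
  assumes d: "d > 0" and v: "dim_vec v = d ^ Suc n" and x: "x < d" and y: "y < d"
  shows "reduced d (Suc n) [n] (proj v) $$ (x, y) =
    (\<Sum>k<d ^ n. v $ (k * d + x) * cnj (v $ (k * d + y)))"
proof -
  let ?c = "\<lambda>a b. digs d 1 x = map (\<lambda>p. dig d (Suc n) p a) [n] \<and>
    digs d 1 y = map (\<lambda>p. dig d (Suc n) p b) [n] \<and>
    (\<forall>p<Suc n. p \<notin> set [n] \<longrightarrow> dig d (Suc n) p a = dig d (Suc n) p b)"
  have cond: "?c (k * d + z) (k' * d + z') \<longleftrightarrow> z = x \<and> k' = k \<and> z' = y"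
    if "k < d ^ n" "z < d" "k' < d ^ n" "z' < d" for k z k' z'
  proof -
    have others: "(\<forall>p<Suc n. p \<notin> set [n] \<longrightarrow> P p) \<longleftrightarrow> (\<forall>p<n. P p)" for P
      by (auto simp: less_Suc_eq)
    have "(\<forall>p<n. dig d n p k = dig d n p k') \<longleftrightarrow> k = k'"
      using digs_inj[OF d that(1,3)] by (auto simp: list_eq_iff_nth_eq)
    then show ?thesis
      unfolding others digs_one[OF x] digs_one[OF y] using dig_Suc_snoc[OF d] that by auto
  qed
  have "reduced d (Suc n) [n] (proj v) $$ (x, y) =
      (\<Sum>a<d ^ n * d. \<Sum>b<d ^ n * d. if ?c a b then proj v $$ (a, b) else 0)"
    using x y by (simp add: reduced_def mult.commute)
  also have "\<dots> = (\<Sum>k<d ^ n. \<Sum>z<d. \<Sum>k'<d ^ n. \<Sum>z'<d. if z = x then if k' = k then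
      if z' = y then v $ (k * d + z) * cnj (v $ (k' * d + z')) else 0 else 0 else 0)"
    unfolding sum_lessThan_mult
  proof (intro sum.cong refl)
    fix k z k' z' assume "k \<in> {..<d ^ n}" "z \<in> {..<d}" "k' \<in> {..<d ^ n}" "z' \<in> {..<d}"
    then show "(if ?c (k * d + z) (k' * d + z') then proj v $$ (k * d + z, k' * d + z') else 0) =
      (if z = x then if k' = k then
      if z' = y then v $ (k * d + z) * cnj (v $ (k' * d + z')) else 0 else 0 else 0)"
      using cond[of k z k' z'] mult_add_less_mult[of k "d ^ n" z d] mult_add_less_mult[of k' "d ^ n" z' d]
      by (auto simp: proj_def v mult.commute)
  qed
  also have "\<dots> = (\<Sum>k<d ^ n. v $ (k * d + x) * cnj (v $ (k * d + y)))"
    using x y by (simp add: sum_if_const sum.delta')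
  finally show ?thesis .
qed

section \<open>Entropy of A B and B A\<close>

(* Both sides equal t^k det M for M = [[t 1, A], [B, 1]], by eliminating A resp. B with a
   block-triangular factor. *)
lemma det_sylvester:
  fixes A B :: "'a :: idom mat"
  assumes A: "A \<in> carrier_mat n k" and B: "B \<in> carrier_mat k n"
  shows "t ^ k * det (t \<cdot>\<^sub>m 1\<^sub>m n - A * B) = t ^ n * det (t \<cdot>\<^sub>m 1\<^sub>m k - B * A)"
proof -
  let ?M = "four_block_mat (t \<cdot>\<^sub>m 1\<^sub>m n) A B (1\<^sub>m k)"
  let ?L1 = "four_block_mat (1\<^sub>m n) (- A) (0\<^sub>m k n) (1\<^sub>m k)"
  let ?L2 = "four_block_mat (1\<^sub>m n) (0\<^sub>m n k) (- B) (t \<cdot>\<^sub>m 1\<^sub>m k)"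
  have M: "?M \<in> carrier_mat (n + k) (n + k)" and L1: "?L1 \<in> carrier_mat (n + k) (n + k)"
    and L2: "?L2 \<in> carrier_mat (n + k) (n + k)"
    using A B by auto
  have "?L1 * ?M = four_block_mat (t \<cdot>\<^sub>m 1\<^sub>m n - A * B) (0\<^sub>m n k) B (1\<^sub>m k)"
    using A B by (subst mult_four_block_mat) (auto intro!: cong_four_block_mat eq_matI)
  moreover have "det ?L1 = 1"
    by (subst det_four_block_mat_lower_left_zero[of _ n _ k]) (use A in auto)
  moreover have "det (four_block_mat (t \<cdot>\<^sub>m 1\<^sub>m n - A * B) (0\<^sub>m n k) B (1\<^sub>m k)) = det (t \<cdot>\<^sub>m 1\<^sub>m n - A * B)"
    by (subst det_four_block_mat_upper_right_zero[of _ n _ k]) (use A B in auto)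
  ultimately have det_M: "det ?M = det (t \<cdot>\<^sub>m 1\<^sub>m n - A * B)"
    using det_mult[OF L1 M] by simp
  have "?L2 * ?M = four_block_mat (t \<cdot>\<^sub>m 1\<^sub>m n) A (0\<^sub>m k n) (t \<cdot>\<^sub>m 1\<^sub>m k - B * A)"
    using A B by (subst mult_four_block_mat) (auto intro!: cong_four_block_mat eq_matI)
  moreover have "det ?L2 = t ^ k"
    by (subst det_four_block_mat_upper_right_zero[of _ n _ k]) (use B in auto)
  moreover have "det (four_block_mat (t \<cdot>\<^sub>m 1\<^sub>m n) A (0\<^sub>m k n) (t \<cdot>\<^sub>m 1\<^sub>m k - B * A)) = t ^ n * det (t \<cdot>\<^sub>m 1\<^sub>m k - B * A)"
    by (subst det_four_block_mat_lower_left_zero[of _ n _ k]) (use A B in auto)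
  ultimately show ?thesis using det_mult[OF L2 M] det_M by simp
qed

lemma poly_char_poly_eq_det:
  fixes X :: "'a :: field mat"
  assumes X: "X \<in> carrier_mat n n"
  shows "poly (char_poly X) t = det (t \<cdot>\<^sub>m 1\<^sub>m n - X)"
proof -
  have "- char_matrix X t = t \<cdot>\<^sub>m 1\<^sub>m n - X"
    using X unfolding char_matrix_def by (intro eq_matI) auto
  then show ?thesis using char_poly_matrix[OF X] by simp
qed

lemma char_poly_mult_commute:
  fixes A B :: "'a :: field_char_0 mat"
  assumes A: "A \<in> carrier_mat n k" and B: "B \<in> carrier_mat k n"
  shows "[:0, 1:] ^ k * char_poly (A * B) = [:0, 1:] ^ n * char_poly (B * A)"
proof -
  have "poly ([:0, 1:] ^ k * char_poly (A * B)) t = poly ([:0, 1:] ^ n * char_poly (B * A)) t" for t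
    using det_sylvester[OF A B, of t] poly_char_poly_eq_det[of "A * B" n t] poly_char_poly_eq_det[of "B * A" k t] A B
    by simp
  then show ?thesis using poly_eq_poly_eq_iff by blast
qed

lemma vn_entropy_eq_if_x_power_mult_char_poly_eq:
  assumes eq: "[:0, 1:] ^ k * char_poly A = [:0, 1:] ^ l * char_poly B"
    and A: "char_poly A \<noteq> 0"
  shows "vn_entropy d A = vn_entropy d B"
proof -
  have B: "char_poly B \<noteq> 0" using eq A by auto
  let ?f = "\<lambda>X e. real (order e (char_poly X)) * eta d (Re e)"
  let ?S = "{e. poly (char_poly A) e = 0} \<union> {e. poly (char_poly B) e = 0}"
  have S: "finite ?S" using poly_roots_finite[OF A] poly_roots_finite[OF B] by simp
  have f: "?f A e = ?f B e" for e
  proof (cases "e = 0")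
    case False
    then have "order e ([:0, 1:] ^ j) = 0" for j :: nat
      using order_root[of "[:0, 1:] ^ j" e] by simp
    then have "order e (char_poly A) = order e (char_poly B)"
      using arg_cong[OF eq, of "order e"] A B by (simp add: order_mult)
    then show ?thesis by simp
  qed (simp add: eta_def)
  then have "(\<Sum>e\<in>?S. ?f A e) = (\<Sum>e\<in>?S. ?f B e)" by (intro sum.cong refl) (rule f)
  moreover have "(\<Sum>e\<in>{e. poly (char_poly X) e = 0}. ?f X e) = (\<Sum>e\<in>?S. ?f X e)" if "X = A \<or> X = B" for X
    using that by (intro sum.mono_neutral_left[OF S]) (auto simp: order_root)
  ultimately show ?thesis unfolding vn_entropy_def by (metis (no_types, lifting))
qed

lemma vn_entropy_mult_commute:
  fixes A B :: "complex mat"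
  assumes A: "A \<in> carrier_mat n k" and B: "B \<in> carrier_mat k n"
  shows "vn_entropy d (A * B) = vn_entropy d (B * A)"
proof (rule vn_entropy_eq_if_x_power_mult_char_poly_eq)
  show "[:0, 1:] ^ k * char_poly (A * B) = [:0, 1:] ^ n * char_poly (B * A)"
    by (rule char_poly_mult_commute[OF A B])
  show "char_poly (A * B) \<noteq> 0"
    using degree_monic_char_poly[of "A * B" n] A B by auto
qed

section \<open>The measurement record\<close>

(* \<phi>_x of the header for m = Suc n: entry r is the amplitude of the record r of
   A_1 ... A_n followed by the outcome x of A_m. *)
definition branch_vec ::
  "nat \<Rightarrow> nat \<Rightarrow> (nat \<Rightarrow> complex) \<Rightarrow> (nat \<Rightarrow> nat \<Rightarrow> nat \<Rightarrow> complex) \<Rightarrow> nat \<Rightarrow> complex vec" where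
  "branch_vec d n \<alpha> U x = vec (d ^ n) (\<lambda>r. amp \<alpha> U (digs d n r @ [x]))"

lemma dim_psi: "dim_vec (psi d m \<alpha> U) = d ^ Suc m"
  by (simp add: psi_def)

(* The index carries the digit q of Q, the record r of A_1 ... A_n and the digit x of A_m. *)
lemma index_psi_Suc:
  assumes d: "d > 0" and q: "q < d" and r: "r < d ^ n" and x: "x < d"
  shows "psi d (Suc n) \<alpha> U $ ((q * d ^ n + r) * d + x) = (if q = x then branch_vec d n \<alpha> U x $ r else 0)"
proof -
  have "q * d ^ n + r < d * d ^ n" using q r by (rule mult_add_less_mult)
  from mult_add_less_mult[OF this x] have idx: "(q * d ^ n + r) * d + x < d * (d * d ^ n)"
    by (simp add: mult.commute)
  have "digs d (Suc (Suc n)) ((q * d ^ n + r) * d + x) = (q # digs d n r) @ [x]"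
    using digs_Suc_snoc[OF d x] digs_Suc_Cons[OF d q r] by simp
  with idx r show ?thesis by (simp add: psi_def branch_vec_def nth_append del: nth_digs)
qed

lemma qdist_Suc_eq_sq_norm_vec:
  assumes d: "d > 0"
  shows "qdist d (Suc n) \<alpha> U x = sq_norm_vec (branch_vec d n \<alpha> U x)"
proof -
  let ?L = "{xs. length xs = n \<and> set xs \<subseteq> {..<d}}"
  have "qdist d (Suc n) \<alpha> U x = (\<Sum>xs\<in>?L. (cmod (amp \<alpha> U (xs @ [x])))\<^sup>2)"
    unfolding qdist_def Let_def amp_def
    by (intro sum.cong refl) (auto simp: norm_mult power_mult_distrib prod_power_distrib simp flip: prod_norm)
  also have "\<dots> = (\<Sum>r<d ^ n. (cmod (amp \<alpha> U (digs d n r @ [x])))\<^sup>2)"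
    by (rule sum.reindex_bij_betw[OF bij_betw_digs[OF d], symmetric])
  finally show ?thesis by (simp add: sq_norm_vec_def branch_vec_def)
qed

(* The matrix W of the header: column x is \<phi>_x \<otimes> |x\<rangle>. *)
definition branch_mat ::
  "nat \<Rightarrow> nat \<Rightarrow> (nat \<Rightarrow> complex) \<Rightarrow> (nat \<Rightarrow> nat \<Rightarrow> nat \<Rightarrow> complex) \<Rightarrow> complex mat" where
  "branch_mat d n \<alpha> U = mat (d ^ Suc n) d
     (\<lambda>(i, x). if i mod d = x then branch_vec d n \<alpha> U x $ (i div d) else 0)"

lemma dim_row_branch_mat [simp]: "dim_row (branch_mat d n \<alpha> U) = d ^ Suc n"
  by (simp add: branch_mat_def)

lemma dim_col_branch_mat [simp]: "dim_col (branch_mat d n \<alpha> U) = d"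
  by (simp add: branch_mat_def)

lemma reduced_psi_trace_first:
  assumes d: "d > 0"
  shows "reduced d (Suc (Suc n)) [1..<Suc (Suc n)] (proj (psi d (Suc n) \<alpha> U)) =
    branch_mat d n \<alpha> U * map_mat cnj (transpose_mat (branch_mat d n \<alpha> U))"
    (is "?R = ?W * _")
proof (rule eq_matI)
  fix i j assume "i < dim_row (?W * map_mat cnj (transpose_mat ?W))"
    "j < dim_col (?W * map_mat cnj (transpose_mat ?W))"
  then have i: "i < d ^ Suc n" and j: "j < d ^ Suc n" by (simp_all add: branch_mat_def)
  have psi: "psi d (Suc n) \<alpha> U $ (q * d ^ Suc n + k) =
      (if q = k mod d then branch_vec d n \<alpha> U (k mod d) $ (k div d) else 0)"
    if q: "q < d" and k: "k < d ^ Suc n" for q k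
  proof -
    have "k div d < d ^ n" using k by (simp add: div_less_iff_less_mult d mult.commute)
    moreover have "q * d ^ Suc n + k = (q * d ^ n + k div d) * d + k mod d"
      by (simp add: algebra_simps)
    ultimately show ?thesis using index_psi_Suc[OF d q _ mod_less_divisor[OF d]] by simp
  qed
  have "?R $$ (i, j) = (\<Sum>q<d. psi d (Suc n) \<alpha> U $ (q * d ^ Suc n + i) *
      cnj (psi d (Suc n) \<alpha> U $ (q * d ^ Suc n + j)))"
    by (rule reduced_proj_trace_first[OF d dim_psi i j])
  also have "\<dots> = (\<Sum>x<d. ?W $$ (i, x) * cnj (?W $$ (j, x)))"
  proof (intro sum.cong refl)
    fix x assume "x \<in> {..<d}"
    then show "psi d (Suc n) \<alpha> U $ (x * d ^ Suc n + i) * cnj (psi d (Suc n) \<alpha> U $ (x * d ^ Suc n + j)) =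
      ?W $$ (i, x) * cnj (?W $$ (j, x))"
      using psi[of x i] psi[of x j] i j by (simp add: branch_mat_def)
  qed
  also have "\<dots> = (?W * map_mat cnj (transpose_mat ?W)) $$ (i, j)"
    using index_mult_adjoint[of i ?W j] i j by simp
  finally show "?R $$ (i, j) = (?W * map_mat cnj (transpose_mat ?W)) $$ (i, j)" .
qed (simp_all add: reduced_def del: upt_Suc)

lemma reduced_psi_keep_last:
  assumes d: "d > 0"
  shows "reduced d (Suc (Suc n)) [Suc n] (proj (psi d (Suc n) \<alpha> U)) =
    map_mat cnj (transpose_mat (branch_mat d n \<alpha> U)) * branch_mat d n \<alpha> U"
    (is "?R = _ * ?W")
proof (rule eq_matI)
  fix x y assume "x < dim_row (map_mat cnj (transpose_mat ?W) * ?W)"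
    "y < dim_col (map_mat cnj (transpose_mat ?W) * ?W)"
  then have x: "x < d" and y: "y < d" by (simp_all add: branch_mat_def)
  let ?b = "branch_vec d n \<alpha> U"
  have "?R $$ (x, y) = (\<Sum>k<d ^ Suc n. psi d (Suc n) \<alpha> U $ (k * d + x) *
      cnj (psi d (Suc n) \<alpha> U $ (k * d + y)))"
    by (rule reduced_proj_keep_last[OF d dim_psi x y])
  also have "\<dots> = (\<Sum>q<d. \<Sum>r<d ^ n.
      (if q = x then ?b x $ r else 0) * cnj (if q = y then ?b y $ r else 0))"
    unfolding power_Suc sum_lessThan_mult by (intro sum.cong refl) (simp add: index_psi_Suc d x y)
  also have "\<dots> = (\<Sum>r<d ^ n. \<Sum>z<d.
      cnj (if z = x then ?b x $ r else 0) * (if z = y then ?b y $ r else 0))"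
    by (subst sum.swap) (intro sum.cong refl, auto)
  also have "\<dots> = (\<Sum>i<d ^ n * d. cnj (?W $$ (i, x)) * ?W $$ (i, y))"
    unfolding sum_lessThan_mult
  proof (intro sum.cong refl)
    fix r z assume "r \<in> {..<d ^ n}" "z \<in> {..<d}"
    then have "r * d + z < d ^ Suc n" "z < d"
      using mult_add_less_mult[of r "d ^ n" z d] by (simp_all add: mult.commute)
    then have "?W $$ (r * d + z, w) = (if z = w then ?b w $ r else 0)" if "w < d" for w
      using that by (simp add: branch_mat_def)
    with x y show "cnj (if z = x then ?b x $ r else 0) * (if z = y then ?b y $ r else 0) =
      cnj (?W $$ (r * d + z, x)) * ?W $$ (r * d + z, y)"
      by simp
  qed
  also have "\<dots> = (map_mat cnj (transpose_mat ?W) * ?W) $$ (x, y)"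
    using index_adjoint_mult[of x ?W y] x y by (simp add: mult.commute)
  finally show "?R $$ (x, y) = (map_mat cnj (transpose_mat ?W) * ?W) $$ (x, y)" .
qed (simp_all add: reduced_def branch_mat_def)

lemma branch_mat_mult_adjoint_eq_sum_kron:
  assumes d: "d > 0"
  shows "branch_mat d n \<alpha> U * map_mat cnj (transpose_mat (branch_mat d n \<alpha> U)) =
    mat (d ^ Suc n) (d ^ Suc n) (\<lambda>(i, j). \<Sum>x<d.
      complex_of_real (sq_norm_vec (branch_vec d n \<alpha> U x)) *
      kron (proj (normalize_vec (branch_vec d n \<alpha> U x))) (proj (unit_vec d x)) $$ (i, j))"
    (is "?W * ?W' = mat _ _ ?f")
proof (rule eq_matI)
  fix i j assume "i < dim_row (mat (d ^ Suc n) (d ^ Suc n) ?f)" "j < dim_col (mat (d ^ Suc n) (d ^ Suc n) ?f)"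
  then have i: "i < d ^ n * d" and j: "j < d ^ n * d" by (simp_all add: mult.commute)
  then have i': "i div d < d ^ n" and j': "j div d < d ^ n" by (simp_all add: div_less_iff_less_mult d)
  have "(?W * ?W') $$ (i, j) = (\<Sum>x<d. ?W $$ (i, x) * cnj (?W $$ (j, x)))"
    using index_mult_adjoint[of i ?W j] i j by (simp add: mult.commute)
  also have "\<dots> = ?f (i, j)"
    unfolding prod.case
  proof (intro sum.cong refl)
    fix x assume x: "x \<in> {..<d}"
    let ?b = "branch_vec d n \<alpha> U x"
    have "complex_of_real (sq_norm_vec ?b) * proj (normalize_vec ?b) $$ (i div d, j div d) =
        proj ?b $$ (i div d, j div d)"
      using arg_cong[OF sq_norm_vec_smult_proj_normalize_vec[of ?b], of "\<lambda>M. M $$ (i div d, j div d)"] i' j'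
      by (simp add: branch_vec_def proj_def)
    with i j i' j' d x show "?W $$ (i, x) * cnj (?W $$ (j, x)) =
      complex_of_real (sq_norm_vec ?b) * kron (proj (normalize_vec ?b)) (proj (unit_vec d x)) $$ (i, j)"
      by (simp add: kron_def branch_mat_def proj_def branch_vec_def mult.commute)
  qed
  finally show "(?W * ?W') $$ (i, j) = mat (d ^ Suc n) (d ^ Suc n) ?f $$ (i, j)"
    using i j by (simp add: mult.commute)
qed simp_all

theorem theorem1:
  fixes d m :: nat and \<alpha> :: "nat \<Rightarrow> complex" and U :: "nat \<Rightarrow> nat \<Rightarrow> nat \<Rightarrow> complex"
  assumes "d \<ge> 2" and "m \<ge> 1"
    and "(\<Sum>x<d. (cmod (\<alpha> x))\<^sup>2) = 1"
    and "\<forall>i\<in>{2..m}. unitary_fn d (U i)"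
  shows "let \<rho> = reduced d (Suc m) [1..<Suc m] (proj (psi d m \<alpha> U)) in
     (\<exists>\<psi> :: nat \<Rightarrow> complex vec.
        (\<forall>x<d. dim_vec (\<psi> x) = d ^ (m - 1) \<and> (\<Sum>i<d ^ (m - 1). (cmod (\<psi> x $ i))\<^sup>2) = 1) \<and>
        \<rho> = mat (d ^ m) (d ^ m) (\<lambda>(i, j). \<Sum>x<d.
               complex_of_real (qdist d m \<alpha> U x) * kron (proj (\<psi> x)) (proj (unit_vec d x)) $$ (i, j))) \<and>
     vn_entropy d \<rho> = vn_entropy d (reduced d (Suc m) [m] (proj (psi d m \<alpha> U)))"
proof -
  obtain n where m: "m = Suc n" using assms(2) by (cases m) auto
  have d: "d > 0" using assms(1) by simp
  let ?W = "branch_mat d n \<alpha> U"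
  let ?W' = "map_mat cnj (transpose_mat ?W)"
  have W: "?W \<in> carrier_mat (d ^ Suc n) d" and W': "?W' \<in> carrier_mat d (d ^ Suc n)"
    by auto
  show ?thesis
    unfolding Let_def m reduced_psi_trace_first[OF d] reduced_psi_keep_last[OF d]
  proof (intro conjI exI[of _ "\<lambda>x. normalize_vec (branch_vec d n \<alpha> U x)"] allI impI)
    fix x
    show "dim_vec (normalize_vec (branch_vec d n \<alpha> U x)) = d ^ (Suc n - 1)"
      by (simp add: branch_vec_def)
    show "(\<Sum>i<d ^ (Suc n - 1). (cmod (normalize_vec (branch_vec d n \<alpha> U x) $ i))\<^sup>2) = 1"
      using sq_norm_normalize_vec[of "branch_vec d n \<alpha> U x"] d by (simp add: sq_norm_vec_def branch_vec_def)
  next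
    show "?W * ?W' = mat (d ^ Suc n) (d ^ Suc n) (\<lambda>(i, j). \<Sum>x<d.
      complex_of_real (qdist d (Suc n) \<alpha> U x) *
      kron (proj (normalize_vec (branch_vec d n \<alpha> U x))) (proj (unit_vec d x)) $$ (i, j))"
      unfolding qdist_Suc_eq_sq_norm_vec[OF d] by (rule branch_mat_mult_adjoint_eq_sum_kron[OF d])
  next
    show "vn_entropy d (?W * ?W') = vn_entropy d (?W' * ?W)"
      by (rule vn_entropy_mult_commute[OF W W'])
  qed
qed

end
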